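(* Let $a\in\mathbb{C}_p$, $a\ne0$, $A=|a|_p$, and $f(x)=\frac{ax}{x^2+a}$. If $y_0,y_1,\dots,y_k\in\mathbb{C}_p\setminus\{\pm\sqrt{-a}\}$ form a periodic orbit of $f$, i.e. $f(y_i)=y_{i+1}$ for $0\le i<k$ and $f(y_k)=y_0$, then $$|y_0|_p=|y_1|_p=\dots=|y_k|_p\le\sqrt A.$$ *)

theory Defs
  imports "HOL-Computational_Algebra.Polynomial"
begin

text \<open>We model C_p abstractly:
  a field K with a non-archimedean absolute value v extending the normalized p-adic absolute
  value (v p = 1/p), which is algebraically closed and complete with respect to v.
  C_p with |.|_p is an instance of this class.\<close>

definition nonarch_abs :: "('a::field \<Rightarrow> real) \<Rightarrow> bool" where
  "nonarch_abs v \<longleftrightarrow>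
     (\<forall>x. 0 \<le> v x) \<and> (\<forall>x. v x = 0 \<longleftrightarrow> x = 0) \<and>
     (\<forall>x y. v (x * y) = v x * v y) \<and>
     (\<forall>x y. v (x + y) \<le> max (v x) (v y))"

definition alg_closed_field :: "'a::field itself \<Rightarrow> bool" where
  "alg_closed_field _ \<longleftrightarrow> (\<forall>q :: 'a poly. degree q > 0 \<longrightarrow> (\<exists>x. poly q x = 0))"

definition complete_wrt :: "('a::field \<Rightarrow> real) \<Rightarrow> bool" where
  "complete_wrt v \<longleftrightarrow>
     (\<forall>s :: nat \<Rightarrow> 'a. (\<forall>e>0. \<exists>N. \<forall>m\<ge>N. \<forall>n\<ge>N. v (s m - s n) < e) \<longrightarrow>
        (\<exists>L. \<forall>e>0. \<exists>N. \<forall>n\<ge>N. v (s n - L) < e))"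

definition Cp_like :: "nat \<Rightarrow> ('a::field \<Rightarrow> real) \<Rightarrow> bool" where
  "Cp_like p v \<longleftrightarrow> prime p \<and> nonarch_abs v \<and> v (of_nat p) = 1 / real p \<and>
     alg_closed_field TYPE('a) \<and> complete_wrt v"

definition fmap :: "'a::field \<Rightarrow> 'a \<Rightarrow> 'a" where
  "fmap a x = a * x / (x ^ 2 + a)"

end

theory Submission
  imports Defs
begin

text \<open>
  Write \<open>s = \<surd>|a|\<close>. By the strict triangle inequality, \<open>|x| < s\<close> gives \<open>|x\<^sup>2 + a| = |a|\<close> and hence
  \<open>|f x| = |x|\<close>, while \<open>|x| > s\<close> gives \<open>|x\<^sup>2 + a| = |x|\<^sup>2\<close> and hence \<open>|f x| = |a|/|x| < s\<close>.
  So once an orbit enters the open disc of radius \<open>s\<close> its absolute value is frozen there, and an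
  orbit outside the closed disc enters it in one step. A periodic orbit therefore never leaves
  the closed disc, and it either stays on the sphere \<open>|x| = s\<close> or meets the open disc and then has
  constant absolute value.
\<close>

lemma nonarch_abs_one:
  assumes "nonarch_abs v"
  shows "v 1 = 1"
proof -
  have "v 1 = v 1 * v 1" using assms unfolding nonarch_abs_def by (metis mult_1_left)
  moreover have "v 1 \<noteq> 0" using assms unfolding nonarch_abs_def by simp
  ultimately show ?thesis by simp
qed

lemma nonarch_abs_minus:
  assumes "nonarch_abs v"
  shows "v (- x) = v x"
proof -
  have mult: "\<And>x y. v (x * y) = v x * v y" and nonneg: "\<And>x. 0 \<le> v x"
    using assms unfolding nonarch_abs_def by auto
  have "(v (-1))\<^sup>2 = 1\<^sup>2"
    using mult[of "-1" "-1"] nonarch_abs_one[OF assms] by (simp add: power2_eq_square)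
  hence "v (-1) = 1" using nonneg[of "-1"] by (rule power2_eq_imp_eq) simp
  thus ?thesis using mult[of "-1" x] by simp
qed

lemma nonarch_abs_add_eq_right:
  assumes "nonarch_abs v" "v x < v y"
  shows "v (x + y) = v y"
proof -
  have ultra: "\<And>x y. v (x + y) \<le> max (v x) (v y)"
    using assms(1) unfolding nonarch_abs_def by auto
  have "v (x + y) \<le> v y" using ultra[of x y] assms(2) by simp
  moreover have "v y \<le> max (v (x + y)) (v (- x))" using ultra[of "x + y" "- x"] by simp
  ultimately show ?thesis using nonarch_abs_minus[OF assms(1), of x] assms(2) by linarith
qed

lemma nonarch_abs_divide:
  assumes "nonarch_abs v"
  shows "v (x / y) = v x / v y"
proof (cases "y = 0")
  case True
  moreover have "v 0 = 0" using assms unfolding nonarch_abs_def by simp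
  ultimately show ?thesis by simp
next
  case False
  have "v x = v (x / y) * v y" and "v y \<noteq> 0"
    using assms False unfolding nonarch_abs_def by (metis nonzero_eq_divide_eq, simp)
  thus ?thesis by simp
qed

lemma nonarch_abs_power2:
  assumes "nonarch_abs v"
  shows "v (x\<^sup>2) = (v x)\<^sup>2"
  using assms unfolding nonarch_abs_def by (simp add: power2_eq_square)

lemma nonarch_abs_fmap_inside:
  assumes "nonarch_abs v" "v x < sqrt (v a)"
  shows "v (fmap a x) = v x"
proof -
  have nonneg: "0 \<le> v x" "0 \<le> v a" using assms(1) unfolding nonarch_abs_def by auto
  have "(v x)\<^sup>2 < v a"
    using power_strict_mono[OF assms(2) nonneg(1), of 2] nonneg by simp
  hence denom: "v (x\<^sup>2 + a) = v a"
    using nonarch_abs_add_eq_right[OF assms(1)] nonarch_abs_power2[OF assms(1)] by simp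
  have "v a \<noteq> 0" using \<open>(v x)\<^sup>2 < v a\<close> nonneg by auto
  moreover have "v (a * x) = v a * v x" using assms(1) unfolding nonarch_abs_def by auto
  ultimately show ?thesis
    unfolding fmap_def using nonarch_abs_divide[OF assms(1)] denom by simp
qed

lemma nonarch_abs_fmap_outside:
  assumes "nonarch_abs v" "a \<noteq> 0" "sqrt (v a) < v x"
  shows "v (fmap a x) < sqrt (v a)"
proof -
  have nonneg: "0 \<le> v x" "0 \<le> v a" using assms(1) unfolding nonarch_abs_def by auto
  have pos: "0 < v x" using assms(3) nonneg(2) by (meson le_less_trans real_sqrt_ge_zero)
  have "v a < (v x)\<^sup>2"
    using power_strict_mono[OF assms(3) real_sqrt_ge_zero[OF nonneg(2)], of 2] nonneg by simp
  hence denom: "v (x\<^sup>2 + a) = (v x)\<^sup>2"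
    using nonarch_abs_add_eq_right[OF assms(1), of a "x\<^sup>2"] nonarch_abs_power2[OF assms(1)]
    by (simp add: add.commute)
  have "v (a * x) = v a * v x" using assms(1) unfolding nonarch_abs_def by auto
  hence "v (fmap a x) = v a / v x"
    unfolding fmap_def using nonarch_abs_divide[OF assms(1)] denom pos
    by (simp add: power2_eq_square)
  also have "\<dots> < sqrt (v a)"
  proof -
    have "v a = sqrt (v a) * sqrt (v a)" using nonneg by simp
    also have "\<dots> < sqrt (v a) * v x"
      using assms(1,2) nonneg(2) unfolding nonarch_abs_def
      by (intro mult_strict_left_mono[OF assms(3)]) (simp add: less_le)
    finally show ?thesis using pos by (simp add: divide_less_eq)
  qed
  finally show ?thesis .
qed

lemma periodic_trapped_const:
  fixes w :: "nat \<Rightarrow> real"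
  assumes periodic: "\<And>i. w (i + n) = w i" and "0 < n"
    and inside: "\<And>i. w i < s \<Longrightarrow> w (Suc i) = w i"
    and outside: "\<And>i. s < w i \<Longrightarrow> w (Suc i) < s"
  shows "w i = w 0 \<and> w i \<le> s"
proof -
  have frozen: "w (m + d) = w m" if "w m < s" for m d
    by (induction d) (use that inside in auto)
  have periodic_mult: "w (i + d * n) = w i" for i d
  proof (induction d)
    case (Suc d)
    have "w (i + Suc d * n) = w ((i + d * n) + n)" by (simp add: ac_simps)
    then show ?case using periodic[of "i + d * n"] Suc.IH by simp
  qed simp
  have le: "w j \<le> s" for j
  proof (rule ccontr)
    assume "\<not> w j \<le> s"
    hence "w (Suc j) < s" using outside by simp
    have "w j = w (Suc j + (n - 1))" using periodic[of j] \<open>0 < n\<close> by simp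
    also have "\<dots> = w (Suc j)" by (rule frozen[OF \<open>w (Suc j) < s\<close>])
    finally show False using \<open>w (Suc j) < s\<close> \<open>\<not> w j \<le> s\<close> by simp
  qed
  have const: "w i = w j" if "w j < s" for i j
  proof -
    have "j \<le> j * n" using \<open>0 < n\<close> by simp
    hence shift: "i + j * n = j + (i + (j * n - j))" by arith
    have "w i = w (i + j * n)" by (simp only: periodic_mult)
    also have "\<dots> = w j" unfolding shift by (rule frozen[OF that])
    finally show ?thesis .
  qed
  show ?thesis
  proof (cases "w 0 < s")
    case True
    then show ?thesis using const[OF True, of i] le[of i] by simp
  next
    case False
    hence "w 0 = s" using le[of 0] by simp
    moreover have "\<not> w i < s" using const[where i = 0 and j = i] False by auto
    ultimately show ?thesis using le[of i] by simp
  qed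
qed

theorem proposition4p1:
  fixes v :: "'a::field \<Rightarrow> real" and p :: nat and a :: 'a
    and y :: "nat \<Rightarrow> 'a" and k :: nat
  assumes "Cp_like p v"
    and "a \<noteq> 0"
    and "\<forall>i\<le>k. y i ^ 2 \<noteq> - a"
    and "\<forall>i<k. fmap a (y i) = y (Suc i)"
    and "fmap a (y k) = y 0"
  shows "(\<forall>i\<le>k. v (y i) = v (y 0)) \<and> v (y 0) \<le> sqrt (v a)"
proof -
  have na: "nonarch_abs v" using assms(1) unfolding Cp_like_def by simp
  define z where "z n = y (n mod Suc k)" for n
  have orbit: "z (Suc n) = fmap a (z n)" for n
  proof (cases "n mod Suc k = k")
    case True
    then show ?thesis using assms(5) unfolding z_def by (simp add: mod_Suc)
  next
    case False
    hence "n mod Suc k < k" using mod_less_divisor[of "Suc k" n] by linarith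
    then show ?thesis using assms(4) False unfolding z_def by (simp add: mod_Suc)
  qed
  have bound: "v (z i) = v (z 0) \<and> v (z i) \<le> sqrt (v a)" for i
  proof (rule periodic_trapped_const[where n = "Suc k"])
    show "v (z (j + Suc k)) = v (z j)" for j
      unfolding z_def by (simp only: mod_add_self2)
    show "v (z (Suc j)) = v (z j)" if "v (z j) < sqrt (v a)" for j
      using nonarch_abs_fmap_inside[OF na that] by (simp add: orbit)
    show "v (z (Suc j)) < sqrt (v a)" if "sqrt (v a) < v (z j)" for j
      using nonarch_abs_fmap_outside[OF na assms(2) that] by (simp add: orbit)
  qed simp
  have z_eq: "z i = y i" if "i \<le> k" for i using that by (simp add: z_def)
  show ?thesis
  proof (intro conjI allI impI)
    show "v (y i) = v (y 0)" if "i \<le> k" for i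
      using bound[of i] z_eq[OF that] z_eq[of 0] by simp
    show "v (y 0) \<le> sqrt (v a)" using bound[of 0] z_eq[of 0] by simp
  qed
qed

end
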